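(* There is an absolute constant $c>0$ such that the following holds. Let $t,n,k\ge1$ and $d\ge0$ be integers with $(d+1)\mid t$ and $k(d+1)\ge 4$. Then every $d$-runlength constrained $k$-disjunct binary $t\times n$ matrix satisfies $$t\ge\min\left(n,\;c\,\frac{k(d+1)\log n}{\log(k(d+1))}\right).$$ (In the paper's notation: $t\ge\min\big(n,\Omega\big(\tfrac{k d\log n}{\log(kd)}\big)\big)$.)
   Context: $\log$ denotes the base-2 logarithm. A binary $t\times n$ matrix $M$ is $d$-runlength constrained if in every column, any two $1$'s are separated by a run of at least $d$ zeros, i.e. $M_{ij}=M_{i'j}=1$ with $i<i'$ implies $i'-i\ge d+1$. A binary matrix $M$ is $k$-disjunct if for every column $j$ and every set $S$ of at most $k$ columns with $j\notin S$, $\mathsf{supp}(M_{\cdot j})\not\subseteq\bigcup_{j'\in S}\mathsf{supp}(M_{\cdot j'})$, where $\mathsf{supp}$ denotes the support. *)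

theory Defs
  imports Complex_Main
begin

text \<open>A binary t x n matrix is represented as M :: nat \<Rightarrow> nat \<Rightarrow> bool,
  with rows i < t and columns j < n; M i j = True means entry 1.
  Only entries with i < t, j < n are relevant.\<close>

definition col_supp :: "(nat \<Rightarrow> nat \<Rightarrow> bool) \<Rightarrow> nat \<Rightarrow> nat \<Rightarrow> nat set" where
  "col_supp M t j = {i. i < t \<and> M i j}"

definition runlength_constrained ::
  "nat \<Rightarrow> (nat \<Rightarrow> nat \<Rightarrow> bool) \<Rightarrow> nat \<Rightarrow> nat \<Rightarrow> bool" where
  "runlength_constrained d M t n \<longleftrightarrow>
     (\<forall>j<n. \<forall>i<t. \<forall>i'<t. M i j \<and> M i' j \<and> i < i' \<longrightarrow> i' - i \<ge> d + 1)"

definition disjunct :: "nat \<Rightarrow> (nat \<Rightarrow> nat \<Rightarrow> bool) \<Rightarrow> nat \<Rightarrow> nat \<Rightarrow> bool" where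
  "disjunct k M t n \<longleftrightarrow>
     (\<forall>j<n. \<forall>S. S \<subseteq> {..<n} \<and> card S \<le> k \<and> j \<notin> S \<longrightarrow>
        \<not> (col_supp M t j \<subseteq> (\<Union>j'\<in>S. col_supp M t j')))"

end

theory Submission
  imports Defs
begin

text \<open>Cut the rows into \<open>t/(d+1)\<close> blocks of \<open>d+1\<close> consecutive rows. The runlength constraint
  allows at most one 1 per block and column, so every column has weight at most \<open>w = t/(d+1)\<close>.
  Put \<open>r = \<lfloor>w/k\<rfloor> + 1\<close>, so that \<open>w < k r\<close>. If every \<open>r\<close>-subset of the support of column \<open>j\<close> lay
  in the support of another column, \<open>k\<close> such columns would cover column \<open>j\<close>, contradicting
  disjunctness; hence each column owns a private set of at most \<open>r\<close> rows, and distinct columns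
  own distinct private sets. Counting subsets of size at most \<open>r\<close> gives
  \<open>n \<le> (e t/r)\<^sup>r \<le> (e k(d+1))\<^sup>r\<close>; if \<open>w \<ge> k\<close> then \<open>r \<le> 2t/(k(d+1))\<close>, which turns this into the
  claimed bound, and if \<open>w < k\<close> then \<open>r = 1\<close>, the private sets are singletons and \<open>n \<le> t\<close>.\<close>

lemma card_le_if_separated:
  fixes S :: "nat set"
  assumes sub: "S \<subseteq> {..<q * m}" and m: "0 < m"
    and gaps: "\<And>a b. a \<in> S \<Longrightarrow> b \<in> S \<Longrightarrow> a < b \<Longrightarrow> m \<le> b - a"
  shows "card S \<le> q"
proof -
  have "a div m \<noteq> b div m" if "a \<in> S" "b \<in> S" "a < b" for a b
  proof -
    have "(a + m) div m \<le> b div m"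
      using gaps[OF that] that(3) by (intro div_le_mono) linarith
    then show ?thesis using m by simp
  qed
  then have "inj_on (\<lambda>i. i div m) S"
    by (rule linorder_inj_onI')
  moreover have "(\<lambda>i. i div m) ` S \<subseteq> {..<q}"
    using sub m by (auto simp: less_mult_imp_div_less)
  ultimately have "card S \<le> card {..<q}"
    by (intro card_inj_on_le) auto
  then show ?thesis
    by simp
qed

lemma card_col_supp_le:
  assumes "runlength_constrained d M t n" and "j < n" and "t = q * (d + 1)"
  shows "card (col_supp M t j) \<le> q"
  using assms
  by (intro card_le_if_separated[where m = "d + 1"])
     (auto simp: col_supp_def runlength_constrained_def)

lemma cover_by_few:
  assumes "finite A" and "card A \<le> m * r"
    and small: "\<And>B. B \<subseteq> A \<Longrightarrow> card B \<le> r \<Longrightarrow> \<exists>j\<in>J. B \<subseteq> C j"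
  shows "\<exists>S\<subseteq>J. finite S \<and> card S \<le> m \<and> A \<subseteq> (\<Union>j\<in>S. C j)"
  using assms(1,2) small
proof (induction m arbitrary: A)
  case 0
  have "A = {}"
    using "0.prems"(1,2) by simp
  then show ?case
    by (intro exI[of _ "{}"]) simp
next
  case (Suc m)
  obtain B where B: "B \<subseteq> A" "card B \<le> r" "card (A - B) \<le> m * r"
  proof (cases "card A \<le> r")
    case True
    then show ?thesis
      by (intro that[of A]) simp_all
  next
    case False
    then have "r \<le> card A"
      by simp
    then obtain B where B: "B \<subseteq> A" "card B = r"
      by (rule obtain_subset_with_card_n)
    then have "card (A - B) = card A - r"
      using Suc.prems(1) by (simp add: card_Diff_subset finite_subset)
    then show ?thesis
      using B Suc.prems(2) by (intro that[of B]) simp_all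
  qed
  obtain j where j: "j \<in> J" "B \<subseteq> C j"
    using Suc.prems(3)[OF B(1,2)] by blast
  have "\<exists>S\<subseteq>J. finite S \<and> card S \<le> m \<and> A - B \<subseteq> (\<Union>j\<in>S. C j)"
  proof (rule Suc.IH)
    show "finite (A - B)"
      using Suc.prems(1) by simp
    show "card (A - B) \<le> m * r"
      by (fact B(3))
    show "\<exists>j\<in>J. B' \<subseteq> C j" if "B' \<subseteq> A - B" "card B' \<le> r" for B'
      using that Suc.prems(3)[of B'] by blast
  qed
  then obtain S where S: "S \<subseteq> J" "finite S" "card S \<le> m" "A - B \<subseteq> (\<Union>j\<in>S. C j)"
    by blast
  have "card (insert j S) \<le> Suc m"
    using S(2,3) by (simp add: card_insert_if)
  with j S show ?case
    by (intro exI[of _ "insert j S"]) auto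
qed

lemma disjunct_private_subset:
  assumes dis: "disjunct k M t n" and j: "j < n" and weight: "card (col_supp M t j) \<le> k * r"
  shows "\<exists>P. P \<subseteq> col_supp M t j \<and> card P \<le> r \<and> (\<forall>j'<n. j' \<noteq> j \<longrightarrow> \<not> P \<subseteq> col_supp M t j')"
proof (rule ccontr)
  assume no_private: "\<not> ?thesis"
  have "\<exists>S\<subseteq>{..<n} - {j}. finite S \<and> card S \<le> k \<and> col_supp M t j \<subseteq> (\<Union>j'\<in>S. col_supp M t j')"
  proof (rule cover_by_few)
    show "finite (col_supp M t j)" by (simp add: col_supp_def)
    show "card (col_supp M t j) \<le> k * r" by (fact weight)
    show "\<exists>j'\<in>{..<n} - {j}. B \<subseteq> col_supp M t j'"
      if "B \<subseteq> col_supp M t j" "card B \<le> r" for B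
    proof -
      have "\<not> (\<forall>j'<n. j' \<noteq> j \<longrightarrow> \<not> B \<subseteq> col_supp M t j')"
        using no_private that by blast
      then show ?thesis
        by auto
    qed
  qed
  then obtain S where S: "S \<subseteq> {..<n}" "card S \<le> k" "j \<notin> S"
      "col_supp M t j \<subseteq> (\<Union>j'\<in>S. col_supp M t j')"
    by blast
  then show False
    using dis[unfolded disjunct_def, rule_format, OF j, of S] S by blast
qed

lemma disjunct_card_le_card_small_subsets:
  assumes dis: "disjunct k M t n" and n: "2 \<le> n"
    and weight: "\<And>j. j < n \<Longrightarrow> card (col_supp M t j) \<le> k * r"
  shows "n \<le> card {P. P \<subseteq> {..<t} \<and> P \<noteq> {} \<and> card P \<le> r}"
proof -
  have "\<exists>P. P \<subseteq> col_supp M t j \<and> card P \<le> r \<and> (\<forall>j'<n. j' \<noteq> j \<longrightarrow> \<not> P \<subseteq> col_supp M t j')"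
    if "j < n" for j
    using disjunct_private_subset[OF dis that weight[OF that]] .
  then obtain f where f: "\<And>j. j < n \<Longrightarrow> f j \<subseteq> col_supp M t j \<and> card (f j) \<le> r \<and>
      (\<forall>j'<n. j' \<noteq> j \<longrightarrow> \<not> f j \<subseteq> col_supp M t j')"
    by metis
  have "inj_on f {..<n}"
    by (rule inj_onI) (metis f lessThan_iff)
  moreover have "f j \<in> {P. P \<subseteq> {..<t} \<and> P \<noteq> {} \<and> card P \<le> r}" if j: "j < n" for j
  proof -
    have "\<exists>j'<n. j' \<noteq> j"
      using n by (intro exI[of _ "if j = 0 then 1 else 0"]) auto
    then have "f j \<noteq> {}"
      using f[OF j] by blast
    then show ?thesis
      using f[OF j] by (auto simp: col_supp_def)
  qed
  then have "card (f ` {..<n}) \<le> card {P. P \<subseteq> {..<t} \<and> P \<noteq> {} \<and> card P \<le> r}"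
    by (intro card_mono) auto
  ultimately show ?thesis
    by (simp add: card_image)
qed

lemma card_nonempty_subsets_card_le_1:
  assumes "finite A"
  shows "card {P. P \<subseteq> A \<and> P \<noteq> {} \<and> card P \<le> 1} = card A"
proof -
  have "P \<in> (\<lambda>i. {i}) ` A" if P: "P \<subseteq> A" "P \<noteq> {}" "card P \<le> 1" for P
  proof -
    obtain i where i: "i \<in> P"
      using P(2) by blast
    then have "P = {i}"
      using P assms by (auto simp: card_le_Suc0_iff_eq finite_subset)
    then show ?thesis
      using i P(1) by blast
  qed
  then have "{P. P \<subseteq> A \<and> P \<noteq> {} \<and> card P \<le> 1} = (\<lambda>i. {i}) ` A"
    by auto
  then show ?thesis
    by (simp add: card_image)
qed

lemma card_subsets_card_le:
  assumes A: "finite A" and r: "1 \<le> r" "r \<le> card A"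
  shows "real (card {P. P \<subseteq> A \<and> card P \<le> r}) \<le> exp r * (card A / r) ^ r"
proof -
  define t where "t = card A"
  have "card {P. P \<subseteq> A \<and> card P \<le> r} \<le> card (\<Union>i\<le>r. {P. P \<subseteq> A \<and> card P = i})"
    using A by (intro card_mono) auto
  also have "\<dots> \<le> (\<Sum>i\<le>r. card {P. P \<subseteq> A \<and> card P = i})"
    by (rule card_UN_le) simp
  also have "\<dots> = (\<Sum>i\<le>r. t choose i)"
    using A by (simp add: n_subsets t_def)
  finally have count: "real (card {P. P \<subseteq> A \<and> card P \<le> r}) \<le> (\<Sum>i\<le>r. real (t choose i))"
    by (metis of_nat_le_iff of_nat_sum)
  define x where "x = real r / real t"
  have x: "0 < x" "x \<le> 1"
    using r unfolding x_def t_def by auto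
  \<comment> \<open>Chernoff's trick: weight the \<open>i\<close>-subsets by \<open>x\<^sup>i \<ge> x\<^sup>r\<close> and compare with \<open>(1 + x)\<^sup>t\<close>.\<close>
  have "x ^ r * (\<Sum>i\<le>r. real (t choose i)) = (\<Sum>i\<le>r. real (t choose i) * x ^ r)"
    by (simp add: sum_distrib_left mult.commute)
  also have "\<dots> \<le> (\<Sum>i\<le>r. real (t choose i) * x ^ i)"
    using x by (intro sum_mono mult_left_mono power_decreasing) auto
  also have "\<dots> \<le> (\<Sum>i\<le>t. real (t choose i) * x ^ i)"
    using r x unfolding t_def by (intro sum_mono2) auto
  also have "\<dots> = (x + 1) ^ t"
    by (simp add: binomial_ring)
  also have "\<dots> \<le> exp x ^ t"
    using x by (intro power_mono) (auto simp: add.commute)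
  also have "\<dots> = exp r"
    using r by (simp add: x_def t_def flip: exp_of_nat_mult)
  finally have "(\<Sum>i\<le>r. real (t choose i)) \<le> exp r / x ^ r"
    using x by (simp add: field_simps)
  also have "\<dots> = exp r * (t / r) ^ r"
    by (simp add: x_def power_divide)
  finally show ?thesis
    using count by (simp add: t_def)
qed

lemma log_bound_of_le_exp_mult_pow:
  fixes n r :: nat and K t :: real
  assumes n: "1 \<le> n" and bound: "real n \<le> exp r * K ^ r"
    and K: "exp 1 \<le> K" and rK: "real r * K \<le> 2 * t"
  shows "1/4 * K * log 2 n / log 2 K \<le> t"
proof -
  have K_pos: "0 < K"
    using K exp_gt_zero[of 1] by linarith
  have lnK: "1 \<le> ln K"
    using K K_pos by (simp add: ln_ge_iff)
  have "ln n \<le> ln (exp r * K ^ r)"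
    using n bound K_pos by (subst ln_le_cancel_iff) auto
  also have "\<dots> = r * (1 + ln K)"
    using K_pos by (simp add: ln_mult ln_realpow algebra_simps)
  also have "\<dots> \<le> r * (2 * ln K)"
    using lnK by (intro mult_left_mono) auto
  finally have "K * ln n \<le> (real r * K) * (2 * ln K)"
    using K_pos by (simp add: algebra_simps)
  also have "\<dots> \<le> (2 * t) * (2 * ln K)"
    using rK lnK by (intro mult_right_mono) auto
  finally show ?thesis
    using lnK by (simp add: log_def divide_le_eq)
qed

lemma log_bound_of_card_small_subsets:
  fixes K :: nat
  assumes n: "1 \<le> n" and n_le: "n \<le> card {P. P \<subseteq> {..<t} \<and> card P \<le> r}" and r: "1 \<le> r"
    and K: "4 \<le> K" and t_le: "t \<le> r * K" and rK: "r * K \<le> 2 * t"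
  shows "1/4 * real K * log 2 n / log 2 K \<le> real t"
proof -
  have "r \<le> t"
    using rK mult_le_mono2[OF K, of r] by linarith
  have "real t / real r \<le> K"
    using t_le r by (simp add: divide_le_eq mult.commute flip: of_nat_mult)
  have "real n \<le> exp r * (t / r) ^ r"
    using n_le card_subsets_card_le[of "{..<t}" r] r \<open>r \<le> t\<close> by simp
  also have "\<dots> \<le> exp r * real K ^ r"
    using \<open>real t / real r \<le> K\<close> by (intro mult_left_mono power_mono) auto
  finally have bound: "real n \<le> exp r * real K ^ r" .
  have "exp 1 \<le> real K"
    using exp_le K by linarith
  moreover have "real r * K \<le> 2 * real t"
    using rK by (simp flip: of_nat_mult)
  ultimately show ?thesis
    using n by (intro log_bound_of_le_exp_mult_pow[OF _ bound]) auto
qed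

lemma div_add_one_bounds:
  fixes q k :: nat
  assumes "0 < k"
  shows "q < k * (q div k + 1)" and "k \<le> q \<Longrightarrow> k * (q div k + 1) \<le> 2 * q"
  using assms mult_div_mod_eq[of k q] mod_less_divisor[of k q]
  unfolding distrib_left mult_1_right by linarith+

lemma runlength_disjunct_lower_bound:
  assumes t: "1 \<le> t" and k: "1 \<le> k" and dvd: "(d + 1) dvd t" and K4: "4 \<le> k * (d + 1)"
    and rl: "runlength_constrained d M t n" and dis: "disjunct k M t n"
  shows "min (real n) (1/4 * real (k * (d + 1)) * log 2 (real n) / log 2 (real (k * (d + 1))))
    \<le> real t"
proof (cases "n \<le> t")
  case True
  then show ?thesis by simp
next
  case False
  then have n: "2 \<le> n"
    using t by linarith
  obtain q where tq: "t = q * (d + 1)"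
    using dvd by (auto simp: dvd_def mult.commute)
  define r where "r = q div k + 1"
  have q_less: "q < k * r"
    using div_add_one_bounds(1) k unfolding r_def by simp
  have "card (col_supp M t j) \<le> k * r" if "j < n" for j
    using card_col_supp_le[OF rl that tq] q_less by linarith
  then have n_le: "n \<le> card {P. P \<subseteq> {..<t} \<and> P \<noteq> {} \<and> card P \<le> r}"
    by (rule disjunct_card_le_card_small_subsets[OF dis n])
  show ?thesis
  proof (cases "q < k")
    case True
    then have "n \<le> t"
      using n_le card_nonempty_subsets_card_le_1[of "{..<t}"] by (simp add: r_def)
    then show ?thesis by simp
  next
    case False
    then have "k * r \<le> 2 * q"
      using div_add_one_bounds(2) k unfolding r_def by simp
    then have rK: "r * (k * (d + 1)) \<le> 2 * t"
      using mult_le_mono1[of "k * r" "2 * q" "d + 1"] by (simp add: tq algebra_simps)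
    have t_le: "t \<le> r * (k * (d + 1))"
      using mult_le_mono1[of q "k * r" "d + 1"] q_less by (simp add: tq algebra_simps)
    have "card {P. P \<subseteq> {..<t} \<and> P \<noteq> {} \<and> card P \<le> r} \<le> card {P. P \<subseteq> {..<t} \<and> card P \<le> r}"
      by (intro card_mono) auto
    with n_le have "n \<le> card {P. P \<subseteq> {..<t} \<and> card P \<le> r}"
      by simp
    moreover have "1 \<le> n" "1 \<le> r"
      using n by (simp_all add: r_def)
    ultimately show ?thesis
      by (intro min.coboundedI2 log_bound_of_card_small_subsets[OF _ _ _ K4 t_le rK])
  qed
qed

theorem theorem3:
  "\<exists>c::real. c > 0 \<and>
     (\<forall>t n k d :: nat. \<forall>M :: nat \<Rightarrow> nat \<Rightarrow> bool.
        t \<ge> 1 \<longrightarrow> n \<ge> 1 \<longrightarrow> k \<ge> 1 \<longrightarrow>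
        (d + 1) dvd t \<longrightarrow> k * (d + 1) \<ge> 4 \<longrightarrow>
        runlength_constrained d M t n \<longrightarrow> disjunct k M t n \<longrightarrow>
        real t \<ge> min (real n)
          (c * real (k * (d + 1)) * log 2 (real n) / log 2 (real (k * (d + 1)))))"
  by (intro exI[of _ "1/4"]) (use runlength_disjunct_lower_bound in auto)

end
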